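(* Let $(A,E,\varepsilon,\tau)$ be an analytical $B$-$B$-non-commutative probability space. If $\widetilde{E}:L_2(A,\tau)\to L_2(B,\tau_B)$ denotes the orthogonal projection, then $\widetilde{E}(a) = \widehat{E(a)}$ for all $a \in A$. In particular, when $\tau_B$ is faithful, $\widetilde{E}$ extends $E$.
   Context: An analytical $B$-$B$-non-commutative probability space $(A,E,\varepsilon,\tau)$ consists of a $B$-$B$-non-commutative probability space $(A,E,\varepsilon)$ (with $L_b=\varepsilon(b\otimes 1_B)$, $R_b=\varepsilon(1_B\otimes b)$, left algebra $A_\ell$ and right algebra $A_r$) together with a state $\tau:A\to\mathbb{C}$ compatible with $E$ (i.e. $\tau(a)=\tau(L_{E(a)})=\tau(R_{E(a)})$ for all $a\in A$), such that $\tau_B(b)=\tau(L_b)$ is a tracial state on $B$, left multiplication by elements of $A$ on $A/N_\tau$ is bounded (so extends to $L_2(A,\tau)$), and $E$ is completely positive on $A_\ell$ and on $A_r$. Here $N_\tau=\{a\in A:\tau(a^*a)=0\}$, $L_2(A,\tau)$ is the completion of $A/N_\tau$, and $L_2(B,\tau_B)$ is identified with the closure of $\{L_b+N_\tau : b\in B\}$ in $L_2(A,\tau)$ via the isometry $b+N_{\tau_B}\mapsto L_b+N_\tau$. For $a\in A$ the coset $a+N_\tau$ is denoted $a$, and for $b\in B$ the coset $b+N_{\tau_B}$ is denoted $\widehat{b}$. *)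

theory Defs
  imports "HOL-Analysis.Analysis"
begin

definition complex_star_algebra :: "(complex \<Rightarrow> 'a::ring_1 \<Rightarrow> 'a) \<Rightarrow> ('a \<Rightarrow> 'a) \<Rightarrow> bool" where
  "complex_star_algebra sm st \<longleftrightarrow>
     vector_space sm \<and>
     (\<forall>c x y. sm c (x * y) = sm c x * y \<and> sm c (x * y) = x * sm c y) \<and>
     (\<forall>x. st (st x) = x) \<and>
     (\<forall>x y. st (x + y) = st x + st y) \<and>
     (\<forall>c x. st (sm c x) = sm (cnj c) (st x)) \<and>
     (\<forall>x y. st (x * y) = st y * st x)"

definition pos_cone :: "('b::ring_1 \<Rightarrow> 'b) \<Rightarrow> 'b set" where
  "pos_cone st = {p. \<exists>(n::nat) x. p = (\<Sum>i<n. st (x i) * x i)}"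

text \<open>The unital homomorphism
  \<epsilon> : B \<otimes> B^op \<rightarrow> A is represented by L b = \<epsilon>(b \<otimes> 1) and R b = \<epsilon>(1 \<otimes> b),
  so that \<epsilon>(b1 \<otimes> b2) = L b1 * R b2.\<close>
definition bb_ncps ::
  "(complex \<Rightarrow> 'a::ring_1 \<Rightarrow> 'a) \<Rightarrow> (complex \<Rightarrow> 'b::ring_1 \<Rightarrow> 'b) \<Rightarrow>
   ('a \<Rightarrow> 'b) \<Rightarrow> ('b \<Rightarrow> 'a) \<Rightarrow> ('b \<Rightarrow> 'a) \<Rightarrow> bool" where
  "bb_ncps smA smB E L R \<longleftrightarrow>
     Vector_Spaces.linear smB smA L \<and> (\<forall>x y. L (x * y) = L x * L y) \<and> L 1 = 1 \<and> inj L \<and>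
     Vector_Spaces.linear smB smA R \<and> (\<forall>x y. R (x * y) = R y * R x) \<and> R 1 = 1 \<and> inj R \<and>
     (\<forall>b b'. L b * R b' = R b' * L b) \<and>
     Vector_Spaces.linear smA smB E \<and>
     (\<forall>b1 b2 T. E (L b1 * R b2 * T) = b1 * E T * b2) \<and>
     (\<forall>b T. E (T * L b) = E (T * R b))"

definition left_alg :: "('b \<Rightarrow> 'a::ring_1) \<Rightarrow> 'a set" where
  "left_alg R = {T. \<forall>b. T * R b = R b * T}"

definition right_alg :: "('b \<Rightarrow> 'a::ring_1) \<Rightarrow> 'a set" where
  "right_alg L = {T. \<forall>b. T * L b = L b * T}"

definition is_state :: "(complex \<Rightarrow> 'a::ring_1 \<Rightarrow> 'a) \<Rightarrow> ('a \<Rightarrow> 'a) \<Rightarrow> ('a \<Rightarrow> complex) \<Rightarrow> bool" where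
  "is_state sm st \<phi> \<longleftrightarrow>
     Vector_Spaces.linear sm (*) \<phi> \<and> \<phi> 1 = 1 \<and>
     (\<forall>x. \<phi> (st x * x) \<in> \<real> \<and> 0 \<le> Re (\<phi> (st x * x)))"

definition is_tracial_state :: "(complex \<Rightarrow> 'b::ring_1 \<Rightarrow> 'b) \<Rightarrow> ('b \<Rightarrow> 'b) \<Rightarrow> ('b \<Rightarrow> complex) \<Rightarrow> bool" where
  "is_tracial_state sm st \<phi> \<longleftrightarrow> is_state sm st \<phi> \<and> (\<forall>x y. \<phi> (x * y) = \<phi> (y * x))"

definition faithful :: "('b::ring_1 \<Rightarrow> 'b) \<Rightarrow> ('b \<Rightarrow> complex) \<Rightarrow> bool" where
  "faithful st \<phi> \<longleftrightarrow> (\<forall>x. \<phi> (st x * x) = 0 \<longrightarrow> x = 0)"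

text \<open>Complete positivity of E restricted to S (S a *-subalgebra of A), in the Gram form:
  \<Sum>_{i,j} b_i* E(a_i* a_j) b_j is positive for all finite families.\<close>
definition completely_positive_on ::
  "('a::ring_1 \<Rightarrow> 'a) \<Rightarrow> ('b::ring_1 \<Rightarrow> 'b) \<Rightarrow> ('a \<Rightarrow> 'b) \<Rightarrow> 'a set \<Rightarrow> bool" where
  "completely_positive_on stA stB E S \<longleftrightarrow>
     (\<forall>(n::nat) (a::nat \<Rightarrow> 'a) (b::nat \<Rightarrow> 'b). (\<forall>i<n. a i \<in> S) \<longrightarrow>
        (\<Sum>i<n. \<Sum>j<n. stB (b i) * E (stA (a i) * a j) * b j) \<in> pos_cone stB)"

definition analytical_bb_ncps ::
  "(complex \<Rightarrow> 'a::ring_1 \<Rightarrow> 'a) \<Rightarrow> ('a \<Rightarrow> 'a) \<Rightarrow> (complex \<Rightarrow> 'b::ring_1 \<Rightarrow> 'b) \<Rightarrow> ('b \<Rightarrow> 'b) \<Rightarrow>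
   ('a \<Rightarrow> 'b) \<Rightarrow> ('b \<Rightarrow> 'a) \<Rightarrow> ('b \<Rightarrow> 'a) \<Rightarrow> ('a \<Rightarrow> complex) \<Rightarrow> bool" where
  "analytical_bb_ncps smA stA smB stB E L R \<tau> \<longleftrightarrow>
     complex_star_algebra smA stA \<and> complex_star_algebra smB stB \<and>
     bb_ncps smA smB E L R \<and>
     (\<forall>b. L (stB b) = stA (L b)) \<and> (\<forall>b. R (stB b) = stA (R b)) \<and>
     is_state smA stA \<tau> \<and>
     (\<forall>a. \<tau> a = \<tau> (L (E a)) \<and> \<tau> a = \<tau> (R (E a))) \<and>
     is_tracial_state smB stB (\<lambda>b. \<tau> (L b)) \<and>
     (\<forall>a. \<exists>C. \<forall>x. Re (\<tau> (stA (a * x) * (a * x))) \<le> C * Re (\<tau> (stA x * x))) \<and>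
     completely_positive_on stA stB E (left_alg R) \<and>
     completely_positive_on stA stB E (right_alg L)"

text \<open>A model of L_2(A,\<tau>): a Hilbert space H (regarded as a real Hilbert space with inner
  product Re\<langle>_,_\<rangle>) with a map \<iota> : A \<rightarrow> H (a \<mapsto> a + N_\<tau>) that is additive, satisfies
  \<langle>\<iota> x, \<iota> y\<rangle> = \<tau>(x* y) (real part) and has dense range. This determines
  (H, \<iota>) up to unique isometric isomorphism.\<close>
definition L2_model :: "('a::ring_1 \<Rightarrow> 'a) \<Rightarrow> ('a \<Rightarrow> complex) \<Rightarrow> ('a \<Rightarrow> 'h::{real_inner,complete_space}) \<Rightarrow> bool" where
  "L2_model stA \<tau> \<iota> \<longleftrightarrow>
     (\<forall>x y. \<iota> (x + y) = \<iota> x + \<iota> y) \<and>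
     (\<forall>x y. inner (\<iota> x) (\<iota> y) = Re (\<tau> (stA x * y))) \<and>
     closure (range \<iota>) = UNIV"

definition orth_proj :: "'h::real_inner set \<Rightarrow> 'h \<Rightarrow> 'h" where
  "orth_proj K x = (THE p. p \<in> K \<and> (\<forall>k\<in>K. inner (x - p) k = 0))"

end

theory Submission
  imports Defs
begin

text \<open>E is the L2-projection because \<tau> factors through E: for b \<in> B the bimodule
  property gives \<tau>(L b * a) = \<tau>(L (E (L b * a))) = \<tau>(L (b * E a)) = \<tau>(L b * L (E a)),
  so a - L (E a) is orthogonal to every L b, hence to the closure of their image in
  L2(A,\<tau>), while L (E a) itself lies in that closure. Injectivity of b \<mapsto> L b on L2 is
  faithfulness of \<tau>_B, since the squared L2-norm of L b is \<tau>_B(b* b).\<close>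

lemma orth_proj_eqI:
  fixes K :: "'h::real_inner set"
  assumes "q \<in> K" and "\<And>k. k \<in> K \<Longrightarrow> inner (x - q) k = 0"
  shows "orth_proj K x = q"
  unfolding orth_proj_def
proof (rule the_equality)
  show "q \<in> K \<and> (\<forall>k\<in>K. inner (x - q) k = 0)"
    using assms by blast
next
  fix p assume p: "p \<in> K \<and> (\<forall>k\<in>K. inner (x - p) k = 0)"
  have "inner (p - q) (p - q) = inner (x - q) p - inner (x - p) p - inner (x - q) q + inner (x - p) q"
    by (simp add: inner_diff_left inner_diff_right inner_commute)
  also have "\<dots> = 0"
    using p assms by simp
  finally show "p = q"
    by simp
qed

lemma inner_eq_zero_on_closure:
  fixes x :: "'h::real_inner"
  assumes "\<And>k. k \<in> S \<Longrightarrow> inner x k = 0" and "k \<in> closure S"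
  shows "inner x k = 0"
proof -
  have "closure S \<subseteq> {k. inner x k = 0}"
    using assms(1) by (intro closure_minimal closed_hyperplane) blast
  then show ?thesis
    using assms(2) by blast
qed

lemma L2_model_diff:
  assumes "L2_model stA \<tau> \<iota>"
  shows "\<iota> (x - y) = \<iota> x - \<iota> y"
  using assms unfolding L2_model_def by (intro additive.diff additive.intro) blast

lemma L2_model_eq_0_iff:
  assumes "L2_model stA \<tau> \<iota>"
  shows "\<iota> x = 0 \<longleftrightarrow> Re (\<tau> (stA x * x)) = 0"
  using assms unfolding L2_model_def by (metis inner_eq_zero_iff)

lemma bb_ncps_E_left_mult:
  assumes "bb_ncps smA smB E L R"
  shows "E (L b * T) = b * E T"
  using assms unfolding bb_ncps_def by (metis mult.right_neutral mult_1)

lemma bb_ncps_tau_left_mult_E: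
  assumes "bb_ncps smA smB E L R" and "\<And>a. \<tau> a = \<tau> (L (E a))"
  shows "\<tau> (L b * a) = \<tau> (L b * L (E a))"
proof -
  have "\<tau> (L b * a) = \<tau> (L (E (L b * a)))"
    by (rule assms(2))
  also have "\<dots> = \<tau> (L (b * E a))"
    using bb_ncps_E_left_mult[OF assms(1)] by simp
  also have "\<dots> = \<tau> (L b * L (E a))"
    using assms(1) unfolding bb_ncps_def by simp
  finally show ?thesis .
qed

lemma analytical_bb_ncps_orthogonal_left:
  assumes "analytical_bb_ncps smA stA smB stB E L R \<tau>" and "L2_model stA \<tau> \<iota>"
  shows "inner (\<iota> a - \<iota> (L (E a))) (\<iota> (L b)) = 0"
proof -
  have bb: "bb_ncps smA smB E L R" and L_star: "stA (L b) = L (stB b)"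
    and tau_E: "\<And>a. \<tau> a = \<tau> (L (E a))"
    using assms(1) unfolding analytical_bb_ncps_def by auto
  have inner_\<iota>: "inner (\<iota> x) (\<iota> y) = Re (\<tau> (stA x * y))" for x y
    using assms(2) unfolding L2_model_def by blast
  have "inner (\<iota> a) (\<iota> (L b)) = inner (\<iota> (L (E a))) (\<iota> (L b))"
    using bb_ncps_tau_left_mult_E[where \<tau>=\<tau>, OF bb tau_E, of "stB b" a]
    by (simp add: inner_commute[of _ "\<iota> (L b)"] inner_\<iota> L_star)
  then show ?thesis
    by (simp add: inner_diff_left)
qed

lemma analytical_bb_ncps_orth_proj_left:
  assumes "analytical_bb_ncps smA stA smB stB E L R \<tau>" and "L2_model stA \<tau> \<iota>"
  shows "orth_proj (closure (\<iota> ` range L)) (\<iota> a) = \<iota> (L (E a))"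
proof (rule orth_proj_eqI)
  show "\<iota> (L (E a)) \<in> closure (\<iota> ` range L)"
    by (rule subsetD[OF closure_subset]) simp
next
  fix k assume "k \<in> closure (\<iota> ` range L)"
  then show "inner (\<iota> a - \<iota> (L (E a))) k = 0"
    by (rule inner_eq_zero_on_closure[rotated])
      (auto simp: analytical_bb_ncps_orthogonal_left[OF assms])
qed

lemma analytical_bb_ncps_inj_left:
  assumes "analytical_bb_ncps smA stA smB stB E L R \<tau>" and "L2_model stA \<tau> \<iota>"
    and "faithful stB (\<lambda>b. \<tau> (L b))"
  shows "inj (\<lambda>b. \<iota> (L b))"
proof (rule injI)
  have L_lin: "Vector_Spaces.linear smB smA L" and L_mult: "L (x * y) = L x * L y"
    and L_star: "L (stB x) = stA (L x)"
    and tau_B: "is_tracial_state smB stB (\<lambda>b. \<tau> (L b))" for x y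
    using assms(1) unfolding analytical_bb_ncps_def bb_ncps_def by auto
  fix x y assume "\<iota> (L x) = \<iota> (L y)"
  then have "\<iota> (L (x - y)) = 0"
    using L2_model_diff[OF assms(2)] module_hom.diff[OF Vector_Spaces.linear.axioms(3)[OF L_lin]]
    by simp
  then have "Re (\<tau> (L (stB (x - y) * (x - y)))) = 0"
    using L2_model_eq_0_iff[OF assms(2)] by (simp add: L_mult L_star)
  moreover have "\<tau> (L (stB (x - y) * (x - y))) \<in> \<real>"
    using tau_B unfolding is_tracial_state_def is_state_def by blast
  ultimately have "\<tau> (L (stB (x - y) * (x - y))) = 0"
    by (simp add: complex_is_Real_iff complex_eq_iff)
  then show "x = y"
    using assms(3) unfolding faithful_def by (metis right_minus_eq)
qed

theorem proposition3p7:
  fixes smA :: "complex \<Rightarrow> 'a::ring_1 \<Rightarrow> 'a" and stA :: "'a \<Rightarrow> 'a"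
    and smB :: "complex \<Rightarrow> 'b::ring_1 \<Rightarrow> 'b" and stB :: "'b \<Rightarrow> 'b"
    and E :: "'a \<Rightarrow> 'b" and L R :: "'b \<Rightarrow> 'a" and \<tau> :: "'a \<Rightarrow> complex"
    and \<iota> :: "'a \<Rightarrow> 'h::{real_inner,complete_space}"
  assumes "analytical_bb_ncps smA stA smB stB E L R \<tau>"
    and "L2_model stA \<tau> \<iota>"
  shows "(\<forall>a. orth_proj (closure (\<iota> ` range L)) (\<iota> a) = \<iota> (L (E a))) \<and>
         (faithful stB (\<lambda>b. \<tau> (L b)) \<longrightarrow> inj (\<lambda>b. \<iota> (L b)))"
  using analytical_bb_ncps_orth_proj_left[OF assms] analytical_bb_ncps_inj_left[OF assms]
  by blast

end
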